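(* Let $k\ge 2$ and $n$ be positive integers. If $\mathcal{F}\subset\binom{[n]}{k}$ is an intersecting family satisfying $\binom{[n]}{k-1}\subset\mathcal{D}(\mathcal{F})$, then $n\le 3k-2$.
   Context: $[n]=\{1,\dots,n\}$; $\binom{S}{j}$ is the family of all $j$-element subsets of $S$. For a family $\mathcal{F}$ of sets, $\mathcal{D}(\mathcal{F})=\{F\setminus F' : F,F'\in\mathcal{F}\}$. A family is intersecting if any two of its members (not necessarily distinct) have nonempty intersection. *)

theory Defs
  imports Main
begin

definition diff_family :: "'a set set \<Rightarrow> 'a set set" where
  "diff_family F = {A - B | A B. A \<in> F \<and> B \<in> F}"

definition intersecting :: "'a set set \<Rightarrow> bool" where
  "intersecting F \<longleftrightarrow> (\<forall>A\<in>F. \<forall>B\<in>F. A \<inter> B \<noteq> {})"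

definition k_subsets :: "'a set \<Rightarrow> nat \<Rightarrow> 'a set set" where
  "k_subsets S j = {A. A \<subseteq> S \<and> card A = j}"

end

theory Submission
  imports Defs
begin

text \<open>Fix a member \<open>F\<^sub>0\<close> of \<open>\<F>\<close> and let \<open>C = [n] - F\<^sub>0\<close>. Every \<open>(k-1)\<close>-set
  \<open>D \<subseteq> C\<close> is \<open>A - B\<close> for some \<open>A \<in> \<F>\<close>, so \<open>A = D + x\<close> with \<open>x \<in> F\<^sub>0\<close>, as \<open>A\<close> meets \<open>F\<^sub>0\<close>.
  Two such extension points agree when the sets \<open>D\<close> are disjoint, hence whenever \<open>C\<close> still
  contains a \<open>(k-1)\<close>-set disjoint from both. Now take \<open>D\<^sub>1 \<subseteq> C\<close> with point \<open>a\<close>,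
  drop one element \<open>p\<close> of \<open>D\<^sub>1\<close> and write \<open>(D\<^sub>1 - p) + a = A - B\<close>. Then \<open>B \<in> \<F>\<close> misses
  \<open>a\<close> and \<open>D\<^sub>1 - p\<close>, so it contains \<open>p\<close>; replacing \<open>p\<close> by some \<open>q \<in> C - B\<close> gives a set
  \<open>D\<close> disjoint from \<open>B\<close>, whose extension point therefore lies in \<open>B\<close> and differs from \<open>a\<close>.
  But \<open>D\<^sub>1 \<union> D\<close> has only \<open>k\<close> elements, so if \<open>|C| \<ge> 2k - 1\<close> the two points must agree.\<close>

lemma diff_family_has_disjoint_member:
  assumes "D \<in> diff_family F"
  shows "\<exists>B\<in>F. B \<inter> D = {}"
  using assms unfolding diff_family_def by blast

lemma diff_family_extension_point:
  assumes "intersecting F" "F\<^sub>0 \<in> F" "\<forall>A\<in>F. card A = Suc m"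
    and "D \<in> diff_family F" "card D = m" "D \<inter> F\<^sub>0 = {}"
  shows "\<exists>x\<in>F\<^sub>0. insert x D \<in> F"
proof -
  obtain A B where AB: "A \<in> F" "B \<in> F" "D = A - B"
    using assms(4) unfolding diff_family_def by blast
  have "card A = Suc m" using assms(3) AB(1) by blast
  then have "finite A" by (simp add: card_ge_0_finite)
  have "D \<subseteq> A" using AB(3) by blast
  then have "card (A - D) = 1"
    using \<open>finite A\<close> \<open>card A = Suc m\<close> assms(5) by (simp add: card_Diff_subset finite_subset)
  then obtain x where "A - D = {x}" by (meson card_1_singletonE)
  then have A_eq: "A = insert x D" using \<open>D \<subseteq> A\<close> by blast
  have "A \<inter> F\<^sub>0 \<noteq> {}" using assms(1,2) AB(1) unfolding intersecting_def by blast
  then have "x \<in> F\<^sub>0" using A_eq assms(6) by blast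
  then show ?thesis using A_eq AB(1) by blast
qed

lemma intersecting_extension_points_eq:
  assumes "intersecting F" "insert x D \<in> F" "insert y D' \<in> F"
    and "D \<inter> D' = {}" "x \<notin> D'" "y \<notin> D"
  shows "x = y"
proof -
  have "insert x D \<inter> insert y D' \<noteq> {}"
    using assms(1-3) unfolding intersecting_def by blast
  then show ?thesis using assms(4-6) by auto
qed

lemma extension_points_eq_if_room:
  assumes "intersecting F" "finite C" "C \<inter> F\<^sub>0 = {}"
    and ext: "\<And>D. D \<subseteq> C \<Longrightarrow> card D = m \<Longrightarrow> \<exists>z\<in>F\<^sub>0. insert z D \<in> F"
    and "D \<subseteq> C" "D' \<subseteq> C" "card (D \<union> D') + m \<le> card C"
    and "x \<in> F\<^sub>0" "insert x D \<in> F" "y \<in> F\<^sub>0" "insert y D' \<in> F"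
  shows "x = y"
proof -
  have "D \<union> D' \<subseteq> C" using assms(5,6) by blast
  then have "card (C - (D \<union> D')) = card C - card (D \<union> D')"
    using assms(2) by (meson card_Diff_subset finite_subset)
  then have "m \<le> card (C - (D \<union> D'))" using assms(7) by linarith
  then obtain D\<^sub>2 where D\<^sub>2: "D\<^sub>2 \<subseteq> C - (D \<union> D')" "card D\<^sub>2 = m"
    by (meson obtain_subset_with_card_n)
  then obtain z where z: "z \<in> F\<^sub>0" "insert z D\<^sub>2 \<in> F" using ext by blast
  have "z \<notin> C" "x \<notin> C" "y \<notin> C" using z(1) assms(3,8,10) by blast+
  then have "x = z" "y = z"
    using intersecting_extension_points_eq[OF assms(1,9) z(2)]
      intersecting_extension_points_eq[OF assms(1,11) z(2)] D\<^sub>2(1) assms(5,6) by auto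
  then show ?thesis by simp
qed

lemma intersecting_diff_family_complement_card_le:
  assumes inter: "intersecting F" and uniform: "\<forall>A\<in>F. card A = Suc m" and "m \<ge> 1"
    and "F\<^sub>0 \<in> F" "finite C" "C \<inter> F\<^sub>0 = {}"
    and diff: "\<And>E. E \<subseteq> C \<union> F\<^sub>0 \<Longrightarrow> card E = m \<Longrightarrow> E \<in> diff_family F"
  shows "card C \<le> 2 * m"
proof (rule ccontr)
  assume "\<not> card C \<le> 2 * m"
  then have large: "2 * m + 1 \<le> card C" by simp
  have ext: "\<exists>z\<in>F\<^sub>0. insert z D \<in> F" if "D \<subseteq> C" "card D = m" for D
    by (rule diff_family_extension_point[OF inter \<open>F\<^sub>0 \<in> F\<close> uniform diff[OF _ that(2)] that(2)])
      (use that(1) assms(6) in blast)+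
  have same_point: "x = y"
    if "D \<subseteq> C" "D' \<subseteq> C" "card (D \<union> D') \<le> Suc m" "x \<in> F\<^sub>0" "insert x D \<in> F"
      "y \<in> F\<^sub>0" "insert y D' \<in> F" for D D' x y
  proof (rule extension_points_eq_if_room[OF inter \<open>finite C\<close> \<open>C \<inter> F\<^sub>0 = {}\<close> ext that(1,2) _ that(4-7)])
    show "card (D \<union> D') + m \<le> card C" using that(3) large by linarith
  qed
  obtain D\<^sub>1 where D\<^sub>1: "D\<^sub>1 \<subseteq> C" "card D\<^sub>1 = m"
    using obtain_subset_with_card_n[of m C] large by auto
  then obtain a where a: "a \<in> F\<^sub>0" "insert a D\<^sub>1 \<in> F" using ext by blast
  from D\<^sub>1(2) \<open>m \<ge> 1\<close> obtain p where "p \<in> D\<^sub>1" by (metis card.empty ex_in_conv not_one_le_zero)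
  define S where "S = D\<^sub>1 - {p}"
  have "finite S" "S \<subseteq> C" using S_def D\<^sub>1(1) \<open>finite C\<close> finite_subset by auto
  have card_S: "card S = m - 1" using S_def D\<^sub>1 \<open>p \<in> D\<^sub>1\<close> by simp
  have "a \<notin> S" using a(1) \<open>S \<subseteq> C\<close> assms(6) by blast
  then have "card (insert a S) = m" using \<open>finite S\<close> card_S \<open>m \<ge> 1\<close> by simp
  moreover have "insert a S \<subseteq> C \<union> F\<^sub>0" using \<open>S \<subseteq> C\<close> a(1) by blast
  ultimately have "insert a S \<in> diff_family F" by (rule diff[rotated])
  then obtain B where B: "B \<in> F" "B \<inter> insert a S = {}" using diff_family_has_disjoint_member by blast
  have "insert a D\<^sub>1 \<inter> B \<noteq> {}" using inter a(2) B(1) unfolding intersecting_def by blast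
  then have "p \<in> B" using B(2) S_def by blast
  have "card B = Suc m" using uniform B(1) by blast
  then have "card C - Suc m \<le> card (C - B)"
    using diff_card_le_card_Diff[of B C] by (simp add: card_ge_0_finite)
  then have "card S < card (C - B)" using large card_S \<open>m \<ge> 1\<close> by linarith
  then have "\<not> C - B \<subseteq> S" using card_mono[OF \<open>finite S\<close>] by (meson not_le)
  then obtain q where q: "q \<in> C" "q \<notin> B" "q \<notin> S" by blast
  define D where "D = insert q S"
  have "D \<subseteq> C" "card D = m"
    using D_def q \<open>S \<subseteq> C\<close> \<open>finite S\<close> card_S \<open>m \<ge> 1\<close> by auto
  then obtain x where x: "x \<in> F\<^sub>0" "insert x D \<in> F" using ext by blast
  have "insert x D \<inter> B \<noteq> {}" using inter x(2) B(1) unfolding intersecting_def by blast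
  then have "x \<in> B" using D_def q(2) B(2) by blast
  have "D\<^sub>1 \<union> D = insert q D\<^sub>1" using D_def S_def by blast
  then have "card (D\<^sub>1 \<union> D) \<le> Suc m"
    using D\<^sub>1 finite_subset[OF D\<^sub>1(1) \<open>finite C\<close>] by (simp add: card_insert_if)
  then have "a = x" using same_point[OF D\<^sub>1(1) \<open>D \<subseteq> C\<close> _ a x] by blast
  then show False using \<open>x \<in> B\<close> B(2) by blast
qed

theorem theorem2:
  fixes k n :: nat and F :: "nat set set"
  assumes "k \<ge> 2" and "n \<ge> 1"
    and "F \<subseteq> k_subsets {1..n} k"
    and "intersecting F"
    and "k_subsets {1..n} (k - 1) \<subseteq> diff_family F"
  shows "n \<le> 3 * k - 2"
proof (cases "k - 1 \<le> n")
  case False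
  then show ?thesis by simp
next
  case True
  have diff: "E \<in> diff_family F" if "E \<subseteq> {1..n}" "card E = k - 1" for E
    using assms(5) that unfolding k_subsets_def by blast
  obtain F\<^sub>0 where "F\<^sub>0 \<in> F"
    using diff[of "{1..k-1}"] True unfolding diff_family_def by auto
  have F\<^sub>0: "F\<^sub>0 \<subseteq> {1..n}" "card F\<^sub>0 = k" using assms(3) \<open>F\<^sub>0 \<in> F\<close> unfolding k_subsets_def by auto
  have uniform: "\<forall>A\<in>F. card A = Suc (k - 1)" using assms(1,3) unfolding k_subsets_def by auto
  have "card ({1..n} - F\<^sub>0) \<le> 2 * (k - 1)"
  proof (rule intersecting_diff_family_complement_card_le[OF assms(4) uniform _ \<open>F\<^sub>0 \<in> F\<close>])
    show "1 \<le> k - 1" using assms(1) by simp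
    show "E \<in> diff_family F" if "E \<subseteq> {1..n} - F\<^sub>0 \<union> F\<^sub>0" "card E = k - 1" for E
      using diff that F\<^sub>0(1) by blast
  qed auto
  then show ?thesis using F\<^sub>0 by (simp add: card_Diff_subset finite_subset)
qed

end
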